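(* Let $\gamma:[0,1]\to\mathbb{R}^2$ be a $C^1$ curve with constant speed $c>0$ with $\gamma(0)=(0,0)$ and $\gamma'(0)=(c,0)$, and let $\theta$ be a turning angle function for $\gamma$ with $\theta(0)\in 2\pi\mathbb{Z}$. If $|\theta(1)-\theta(0)|\ge 2\pi$ and \[\|\gamma(1)\|\ge\sqrt{2\big(1-\cos\theta(1)\big)}\,\max_{s\in[0,1]}\|\gamma(s)\|,\] then there exist cuts $0\le c_1\le c_2\le 1$ such that $r_{(c_1,c_2)}(0)=r_{(c_1,c_2)}(1)$ (the rearranged curve is closed, not necessarily smooth at the end point).
   Context: A turning angle function for $\gamma$ is a continuous function $\theta$ with $\gamma'(s)=c(\cos\theta(s),\sin\theta(s))$. Concatenation: if $\alpha$ on $[a_1,b_1]$ and $\beta$ on $[a_2,b_2]$ are $C^1$ planar curves with the same constant speed, $\alpha*\beta$ is the curve on $[0,(b_1-a_1)+(b_2-a_2)]$ that equals $\alpha(s+a_1)$ for $s\le b_1-a_1$ and equals $T(\beta(s-(b_1-a_1)+a_2))$ afterwards, where $T$ is the orientation-preserving rigid motion of $\mathbb{R}^2$ sending $\beta(a_2)$ to $\alpha(b_1)$ and the unit tangent $\beta'(a_2)/c$ to $\alpha'(b_1)/c$. For cuts $0\le c_1\le c_2\le 1$, let $\gamma_1,\gamma_2,\gamma_3$ be the restrictions of $\gamma$ to $[0,c_1]$, $[c_1,c_2]$, $[c_2,1]$ (an arc of length zero is a point carrying the tangent direction of $\gamma$ there). The rearranged curve is $r_{(c_1,c_2)}:=\gamma_1*\gamma_3*\gamma_2:[0,1]\to\mathbb{R}^2$.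 Throughout this setting the paper normalizes $\gamma(0)=(0,0)$ and the initial tangent along the positive $x$-axis. *)

theory Defs
  imports "HOL-Analysis.Analysis"
begin

text \<open>The plane R^2 is modelled as the complex numbers. A curve piece is a tuple
  (curve, its derivative function, a, b) describing the restriction to [a,b].\<close>

type_synonym arc = "(real \<Rightarrow> complex) \<times> (real \<Rightarrow> complex) \<times> real \<times> real"

text \<open>Orientation preserving rigid motion sending point q to p and unit tangent v to
  unit tangent u (u, v given as velocity vectors of equal speed, so u / v is unit).\<close>
definition rigid_motion :: "complex \<Rightarrow> complex \<Rightarrow> complex \<Rightarrow> complex \<Rightarrow> complex \<Rightarrow> complex" where
  "rigid_motion p u q v z = p + (u / v) * (z - q)"

definition concat_arc :: "arc \<Rightarrow> arc \<Rightarrow> arc" where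
  "concat_arc A B = (case A of (\<alpha>, \<alpha>', a1, b1) \<Rightarrow> case B of (\<beta>, \<beta>', a2, b2) \<Rightarrow>
     ((\<lambda>s. if s \<le> b1 - a1 then \<alpha> (s + a1)
           else rigid_motion (\<alpha> b1) (\<alpha>' b1) (\<beta> a2) (\<beta>' a2) (\<beta> (s - (b1 - a1) + a2))),
      (\<lambda>s. if s \<le> b1 - a1 then \<alpha>' (s + a1)
           else (\<alpha>' b1 / \<beta>' a2) * \<beta>' (s - (b1 - a1) + a2)),
      0, (b1 - a1) + (b2 - a2)))"

definition rearranged :: "(real \<Rightarrow> complex) \<Rightarrow> (real \<Rightarrow> complex) \<Rightarrow> real \<Rightarrow> real \<Rightarrow> real \<Rightarrow> complex" where
  "rearranged \<gamma> \<gamma>' c1 c2 =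
     fst (concat_arc (concat_arc (\<gamma>, \<gamma>', 0, c1) (\<gamma>, \<gamma>', c2, 1)) (\<gamma>, \<gamma>', c1, c2))"

definition turning_angle :: "(real \<Rightarrow> complex) \<Rightarrow> real \<Rightarrow> (real \<Rightarrow> real) \<Rightarrow> bool" where
  "turning_angle \<gamma>' c \<theta> \<longleftrightarrow> continuous_on {0..1} \<theta> \<and>
     (\<forall>s\<in>{0..1}. \<gamma>' s = complex_of_real c * cis (\<theta> s))"

end

theory Submission
  imports Defs
begin

text \<open>Suppose no rearrangement closes. As \<open>\<gamma>(0) = 0\<close>, the end point \<open>F(c\<^sub>1, c\<^sub>2)\<close> of the
  rearranged curve is then a continuous nowhere vanishing function on the contractible triangle
  \<open>0 \<le> c\<^sub>1 \<le> c\<^sub>2 \<le> 1\<close>, so it has a continuous logarithm there and winds zero times around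
  the boundary. On the diagonal \<open>c\<^sub>1 = c\<^sub>2\<close> and on the edge \<open>c\<^sub>2 = 1\<close> nothing is rearranged,
  so \<open>F = \<gamma>(1)\<close>. On the edge \<open>c\<^sub>1 = 0\<close>,
  \<open>F(0, s) = cis (-\<theta>(s)) (\<gamma>(1) + (cis \<theta>(1) - 1) \<gamma>(s))\<close>, and the hypothesis on \<open>\<parallel>\<gamma>(1)\<parallel>\<close>
  keeps the second factor in the closed disc of radius \<open>\<parallel>\<gamma>(1)\<parallel>\<close> around \<open>\<gamma>(1)\<close>, where it has a
  continuous principal logarithm. So along that edge the argument of \<open>F\<close> changes by
  \<open>\<theta>(0) - \<theta>(1)\<close> plus an angle of modulus at most \<open>\<pi>\<close>, which cannot vanish when
  \<open>|\<theta>(1) - \<theta>(0)| \<ge> 2\<pi>\<close>.\<close>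

lemma continuous_exp_constant_imp_eq:
  fixes h :: "'a::topological_space \<Rightarrow> complex"
  assumes "connected S" "continuous_on S h" "\<And>x. x \<in> S \<Longrightarrow> exp (h x) = z"
    and "x \<in> S" "y \<in> S"
  shows "h x = h y"
proof -
  have "h constant_on S"
  proof (rule continuous_discrete_range_constant[OF assms(1,2)])
    fix x assume x: "x \<in> S"
    have "2 * pi \<le> norm (h y - h x)" if y: "y \<in> S" "h y \<noteq> h x" for y
    proof -
      obtain n :: int where n: "h y = h x + of_int (2 * n) * pi * \<i>"
        using exp_eq assms(3)[OF x] assms(3)[OF y(1)] by metis
      with y have "n \<noteq> 0" by auto
      then have "1 \<le> \<bar>real_of_int n\<bar>" by linarith
      moreover have "norm (h y - h x) = 2 * pi * \<bar>real_of_int n\<bar>"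
        using n by (simp add: norm_mult abs_mult)
      ultimately show ?thesis by simp
    qed
    then show "\<exists>e>0. \<forall>y. y \<in> S \<and> h y \<noteq> h x \<longrightarrow> e \<le> norm (h y - h x)"
      by (intro exI[of _ "2 * pi"]) auto
  qed
  then show ?thesis using assms(4,5) by (auto simp: constant_on_def)
qed

lemma norm_cis_minus_1: "norm (cis x - 1) = sqrt (2 * (1 - cos x))"
proof -
  have "(norm (cis x - 1))\<^sup>2 = (cos x - 1)\<^sup>2 + (sin x)\<^sup>2"
    by (simp add: cmod_power2)
  also have "\<dots> = 2 * (1 - cos x)"
    using sin_cos_squared_add[of x] by (simp add: power2_eq_square algebra_simps)
  finally show ?thesis by (metis norm_ge_zero real_sqrt_abs abs_of_nonneg)
qed

lemma cball_1_1_not_nonpos_Reals: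
  fixes z :: complex
  assumes "norm (z - 1) \<le> 1" "z \<noteq> 0"
  shows "z \<notin> \<real>\<^sub>\<le>\<^sub>0"
proof
  assume "z \<in> \<real>\<^sub>\<le>\<^sub>0"
  then have "Re z \<le> 0" "Im z = 0" by (auto simp: complex_nonpos_Reals_iff)
  with assms show False by (simp add: cmod_def complex_eq_iff)
qed

lemma norm_le_SUP_norm:
  fixes f :: "'a::topological_space \<Rightarrow> 'b::real_normed_vector"
  assumes "compact S" "continuous_on S f" "x \<in> S"
  shows "norm (f x) \<le> (SUP s\<in>S. norm (f s))"
  by (intro cSUP_upper assms bounded_imp_bdd_above compact_imp_bounded compact_continuous_image
      continuous_intros)

definition cut_triangle :: "(real \<times> real) set" where
  "cut_triangle = {(a, b). 0 \<le> a \<and> a \<le> b \<and> b \<le> 1}"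

lemma convex_cut_triangle: "convex cut_triangle"
  unfolding cut_triangle_def convex_alt
  by (auto intro!: add_mono mult_left_mono simp: convex_bound_le)

text \<open>The boundary of the triangle is a null-homotopic loop, so a function that is constant
  on two of its sides winds zero times along the third one.\<close>

lemma logarithm_along_left_edge_closes:
  fixes F :: "real \<times> real \<Rightarrow> complex"
  assumes F: "continuous_on cut_triangle F" and F_nonzero: "\<And>p. p \<in> cut_triangle \<Longrightarrow> F p \<noteq> 0"
    and diagonal: "\<And>t. t \<in> {0..1} \<Longrightarrow> F (t, t) = z"
    and top: "\<And>t. t \<in> {0..1} \<Longrightarrow> F (t, 1) = z"
    and h: "continuous_on {0..1} h" and h_log: "\<And>s. s \<in> {0..1} \<Longrightarrow> exp (h s) = F (0, s)"
  shows "h 0 = h 1"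
proof -
  obtain g where g: "continuous_on cut_triangle g" and g_log: "\<And>p. p \<in> cut_triangle \<Longrightarrow> F p = exp (g p)"
    using continuous_logarithm_on_contractible[OF F convex_imp_contractible[OF convex_cut_triangle]]
      F_nonzero by metis
  have g_edge: "continuous_on {0..1} (\<lambda>t. g (p t))"
    if "continuous_on {0..1} p" "p ` {0..1} \<subseteq> cut_triangle" for p
    using continuous_on_compose2[OF g that(1,2)] .
  have "g (0, 0) = g (1, 1)"
    by (rule continuous_exp_constant_imp_eq[where z = z, OF _ g_edge])
      (auto intro!: continuous_intros simp: cut_triangle_def diagonal g_log[symmetric])
  moreover have "g (0, 1) = g (1, 1)"
    by (rule continuous_exp_constant_imp_eq[where z = z, OF _ g_edge])
      (auto intro!: continuous_intros simp: cut_triangle_def top g_log[symmetric])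
  moreover have "h 0 - g (0, 0) = h 1 - g (0, 1)"
  proof (rule continuous_exp_constant_imp_eq[where z = 1, OF _ continuous_on_diff[OF h g_edge]])
    fix s :: real assume "s \<in> {0..1}"
    then show "exp (h s - g (0, s)) = 1"
      using h_log g_log[of "(0, s)"] F_nonzero[of "(0, s)"] by (simp add: exp_diff cut_triangle_def)
  qed (auto intro!: continuous_intros simp: cut_triangle_def)
  ultimately show ?thesis by simp
qed

definition rearranged_end :: "(real \<Rightarrow> complex) \<Rightarrow> (real \<Rightarrow> complex) \<Rightarrow> real \<Rightarrow> real \<Rightarrow> complex" where
  "rearranged_end \<gamma> \<gamma>' a b = \<gamma> a + (\<gamma>' a / \<gamma>' b) * (\<gamma> 1 - \<gamma> b) + (\<gamma>' 1 / \<gamma>' b) * (\<gamma> b - \<gamma> a)"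

lemma rearranged_at_0:
  assumes "0 \<le> a" "a \<le> b" "b \<le> 1"
  shows "rearranged \<gamma> \<gamma>' a b 0 = \<gamma> 0"
  using assms by (simp add: rearranged_def concat_arc_def)

lemma rearranged_at_1:
  assumes "0 \<le> a" "a \<le> b" "b \<le> 1" "\<gamma>' a \<noteq> 0" "\<gamma>' b \<noteq> 0"
  shows "rearranged \<gamma> \<gamma>' a b 1 = rearranged_end \<gamma> \<gamma>' a b"
  using assms
  by (auto simp: rearranged_def concat_arc_def rigid_motion_def rearranged_end_def field_simps)

lemma rearranged_end_diagonal: "\<gamma>' t \<noteq> 0 \<Longrightarrow> rearranged_end \<gamma> \<gamma>' t t = \<gamma> 1"
  by (simp add: rearranged_end_def)

lemma rearranged_end_top: "\<gamma>' 1 \<noteq> 0 \<Longrightarrow> rearranged_end \<gamma> \<gamma>' t 1 = \<gamma> 1"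
  by (simp add: rearranged_end_def)

lemma rearranged_end_left_edge:
  fixes \<gamma> \<gamma>' :: "real \<Rightarrow> complex" and c :: real
  assumes "\<gamma> 0 = 0" "\<gamma>' 0 = c" "\<gamma>' s = c * cis (\<theta> s)" "\<gamma>' 1 = c * cis (\<theta> 1)" "c \<noteq> 0"
  shows "rearranged_end \<gamma> \<gamma>' 0 s = cis (- \<theta> s) * (\<gamma> 1 + (cis (\<theta> 1) - 1) * \<gamma> s)"
proof -
  have "cis (\<theta> s) * cis (- \<theta> s) = 1" by (simp add: cis_mult)
  with assms show ?thesis by (simp add: rearranged_end_def field_simps)
qed

lemma continuous_on_rearranged_end:
  assumes "continuous_on {0..1} \<gamma>" "continuous_on {0..1} \<gamma>'" "\<And>t. t \<in> {0..1} \<Longrightarrow> \<gamma>' t \<noteq> 0"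
  shows "continuous_on cut_triangle (\<lambda>p. rearranged_end \<gamma> \<gamma>' (fst p) (snd p))"
  unfolding rearranged_end_def
  by (intro continuous_intros continuous_on_compose2[OF assms(1)] continuous_on_compose2[OF assms(2)])
    (use assms(3) in \<open>auto simp: cut_triangle_def\<close>)

lemma left_edge_logarithm:
  fixes \<gamma> :: "real \<Rightarrow> complex" and \<theta> :: "real \<Rightarrow> real"
  assumes \<gamma>: "continuous_on {0..1} \<gamma>" and \<theta>: "continuous_on {0..1} \<theta>"
    and start: "\<gamma> 0 = 0" and end_nonzero: "\<gamma> 1 \<noteq> 0"
    and bound: "sqrt (2 * (1 - cos (\<theta> 1))) * (SUP s\<in>{0..1}. norm (\<gamma> s)) \<le> norm (\<gamma> 1)"
    and nonzero: "\<And>s. s \<in> {0..1} \<Longrightarrow> \<gamma> 1 + (cis (\<theta> 1) - 1) * \<gamma> s \<noteq> 0"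
  obtains h where "continuous_on {0..1} h"
    "\<And>s. s \<in> {0..1} \<Longrightarrow> exp (h s) = cis (- \<theta> s) * (\<gamma> 1 + (cis (\<theta> 1) - 1) * \<gamma> s)"
    "h 1 - h 0 = Ln (cis (\<theta> 1)) - \<i> * (\<theta> 1 - \<theta> 0)"
proof -
  define H where "H s = 1 + (cis (\<theta> 1) - 1) * \<gamma> s / \<gamma> 1" for s
  have H_eq: "\<gamma> 1 * H s = \<gamma> 1 + (cis (\<theta> 1) - 1) * \<gamma> s" for s
    using end_nonzero by (simp add: H_def field_simps)
  have "norm (cis (\<theta> 1) - 1) * norm (\<gamma> s) \<le> norm (\<gamma> 1)" if "s \<in> {0..1}" for s
    using order.trans[OF mult_left_mono[OF norm_le_SUP_norm[OF _ \<gamma> that] norm_ge_zero]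
        bound[folded norm_cis_minus_1]]
    by simp
  then have "norm (H s - 1) \<le> 1" if "s \<in> {0..1}" for s
    using that end_nonzero by (simp add: H_def norm_mult norm_divide)
  moreover have H_nonzero: "H s \<noteq> 0" if "s \<in> {0..1}" for s
    using nonzero[OF that] H_eq[of s] by auto
  ultimately have H_not_nonpos: "H s \<notin> \<real>\<^sub>\<le>\<^sub>0" if "s \<in> {0..1}" for s
    using cball_1_1_not_nonpos_Reals that by blast
  show ?thesis
  proof
    show "continuous_on {0..1} (\<lambda>s. Ln (\<gamma> 1) - \<i> * \<theta> s + Ln (H s))"
      unfolding H_def
      by (intro continuous_intros continuous_on_compose2[OF \<theta>] continuous_on_compose2[OF \<gamma>])
        (use H_not_nonpos end_nonzero in \<open>auto simp: H_def\<close>)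
    show "exp (Ln (\<gamma> 1) - \<i> * \<theta> s + Ln (H s)) = cis (- \<theta> s) * (\<gamma> 1 + (cis (\<theta> 1) - 1) * \<gamma> s)"
      if "s \<in> {0..1}" for s
      using H_nonzero[OF that] end_nonzero H_eq[of s]
      by (auto simp: exp_add exp_diff exp_minus cis_conv_exp field_simps)
    show "(Ln (\<gamma> 1) - \<i> * \<theta> 1 + Ln (H 1)) - (Ln (\<gamma> 1) - \<i> * \<theta> 0 + Ln (H 0))
        = Ln (cis (\<theta> 1)) - \<i> * (\<theta> 1 - \<theta> 0)"
      using start end_nonzero by (simp add: H_def) (simp add: algebra_simps)
  qed
qed

theorem lemma3p2:
  fixes \<gamma> \<gamma>' :: "real \<Rightarrow> complex" and \<theta> :: "real \<Rightarrow> real" and c :: real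
  assumes deriv: "\<And>t. t \<in> {0..1} \<Longrightarrow> (\<gamma> has_vector_derivative \<gamma>' t) (at t within {0..1})"
    and C1: "continuous_on {0..1} \<gamma>'"
    and speed: "\<And>t. t \<in> {0..1} \<Longrightarrow> norm (\<gamma>' t) = c"
    and cpos: "c > 0"
    and start: "\<gamma> 0 = 0"
    and tan0: "\<gamma>' 0 = complex_of_real c"
    and ta: "turning_angle \<gamma>' c \<theta>"
    and th0: "\<exists>k::int. \<theta> 0 = 2 * pi * of_int k"
    and turn: "\<bar>\<theta> 1 - \<theta> 0\<bar> \<ge> 2 * pi"
    and ineq: "norm (\<gamma> 1) \<ge> sqrt (2 * (1 - cos (\<theta> 1))) * (SUP s\<in>{0..1}. norm (\<gamma> s))"
  shows "\<exists>c1 c2. 0 \<le> c1 \<and> c1 \<le> c2 \<and> c2 \<le> 1 \<and>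
           rearranged \<gamma> \<gamma>' c1 c2 0 = rearranged \<gamma> \<gamma>' c1 c2 1"
proof (rule ccontr)
  assume no_closing: "\<not> ?thesis"
  have \<gamma>: "continuous_on {0..1} \<gamma>"
    using deriv has_vector_derivative_continuous continuous_on_eq_continuous_within by blast
  have \<gamma>'_nonzero: "\<gamma>' t \<noteq> 0" if "t \<in> {0..1}" for t
    using speed[OF that] cpos by auto
  have \<theta>: "continuous_on {0..1} \<theta>" and \<gamma>'_cis: "\<And>s. s \<in> {0..1} \<Longrightarrow> \<gamma>' s = c * cis (\<theta> s)"
    using ta by (auto simp: turning_angle_def)
  define F where "F p = rearranged_end \<gamma> \<gamma>' (fst p) (snd p)" for p
  have F_nonzero: "F p \<noteq> 0" if "p \<in> cut_triangle" for p
    using that no_closing rearranged_at_0 rearranged_at_1 \<gamma>'_nonzero start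
    by (fastforce simp: F_def cut_triangle_def)
  have F_left_edge: "F (0, s) = cis (- \<theta> s) * (\<gamma> 1 + (cis (\<theta> 1) - 1) * \<gamma> s)" if "s \<in> {0..1}" for s
    using rearranged_end_left_edge[where \<gamma> = \<gamma> and \<gamma>' = \<gamma>' and \<theta> = \<theta>, OF start tan0
        \<gamma>'_cis[OF that] \<gamma>'_cis[of 1, simplified]] cpos
    by (simp add: F_def)
  have "\<gamma> 1 \<noteq> 0"
    using F_nonzero[of "(0, 0)"] rearranged_end_diagonal \<gamma>'_nonzero by (simp add: F_def cut_triangle_def)
  moreover have "\<gamma> 1 + (cis (\<theta> 1) - 1) * \<gamma> s \<noteq> 0" if "s \<in> {0..1}" for s
    using F_nonzero[of "(0, s)"] F_left_edge[OF that] that by (auto simp: cut_triangle_def)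
  ultimately obtain h where h: "continuous_on {0..1} h"
    and h_log: "\<And>s. s \<in> {0..1} \<Longrightarrow> exp (h s) = cis (- \<theta> s) * (\<gamma> 1 + (cis (\<theta> 1) - 1) * \<gamma> s)"
    and h_increment: "h 1 - h 0 = Ln (cis (\<theta> 1)) - \<i> * (\<theta> 1 - \<theta> 0)"
    using left_edge_logarithm[OF \<gamma> \<theta> start _ ineq] by blast
  have "h 0 = h 1"
  proof (rule logarithm_along_left_edge_closes[OF _ F_nonzero _ _ h])
    show "continuous_on cut_triangle F"
      unfolding F_def using continuous_on_rearranged_end[OF \<gamma> C1] \<gamma>'_nonzero by blast
    show "exp (h s) = F (0, s)" if "s \<in> {0..1}" for s
      using h_log[OF that] F_left_edge[OF that] by simp
  qed (simp_all add: F_def rearranged_end_diagonal rearranged_end_top \<gamma>'_nonzero)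
  then have "Im (Ln (cis (\<theta> 1))) = \<theta> 1 - \<theta> 0"
    using h_increment by (simp add: complex_eq_iff)
  then show False
    using mpi_less_Im_Ln[of "cis (\<theta> 1)"] Im_Ln_le_pi[of "cis (\<theta> 1)"] turn pi_gt_zero by auto
qed

end
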